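(* Let $R$ be a commutative ring with identity and let $p_0, p_{11}, p_{12}, p_{21}, p_{22}\in R$ be such that $p_0$ divides $p_{11}p_{22}$, $p_{21}$ divides $p_{11}p_{12}$, and $p_{12}$ divides $p_{21}p_{22}$. Set $p_1=p_{11}+p_{12}$ and $p_2=p_{21}+p_{22}$. Then $$\sqrt{(p_0,p_1,p_2)}=\sqrt{(p_0,p_{11},p_{12},p_{21},p_{22})}.$$
   Context: For an ideal $J$ of $R$, $\sqrt{J}$ denotes its radical; $(a_1,\dots,a_k)$ denotes the ideal generated by $a_1,\dots,a_k$. *)

theory Defs
  imports "HOL-Algebra.Algebra"
begin

definition radical :: "('a, 'b) ring_scheme \<Rightarrow> 'a set \<Rightarrow> 'a set" where
  "radical R J = {x \<in> carrier R. \<exists>n::nat. x [^]\<^bsub>R\<^esub> n \<in> J}"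

end

theory Submission
  imports Defs
begin

text \<open>
  Let \<open>I = (p0, p1, p2)\<close>. Writing \<open>p11 p12 = p21 f\<close>, the identity
  \<open>p11^3 = p11^2 p1 - f p11 p2 + f p11 p22\<close> together with \<open>p0 | p11 p22\<close> puts \<open>p11^3\<close>
  into \<open>I\<close>, so \<open>p11\<close> and \<open>p12 = p1 - p11\<close> lie in the ideal \<open>\<surd>I\<close>. The same identity
  with the two pairs exchanged (now using \<open>p12 | p21 p22\<close>) holds in \<open>\<surd>I\<close>, which already
  contains \<open>p11\<close> and hence \<open>p21 p11\<close>; so \<open>p21, p22 \<in> \<surd>I\<close> too. Thus all five generators
  lie in \<open>\<surd>I\<close>, while \<open>p0, p1, p2\<close> lie in the ideal they generate.
\<close>

lemma radical_mono: "I \<subseteq> J \<Longrightarrow> radical R I \<subseteq> radical R J"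
  unfolding radical_def by blast

lemma (in ring) subset_radical:
  assumes "I \<subseteq> carrier R"
  shows "I \<subseteq> radical R I"
proof
  fix x assume "x \<in> I"
  then have "x \<in> carrier R" "x [^] (1::nat) \<in> I" using assms by auto
  then show "x \<in> radical R I" unfolding radical_def by blast
qed

lemma (in ring) radical_radical:
  assumes "I \<subseteq> carrier R"
  shows "radical R (radical R I) = radical R I"
proof
  show "radical R (radical R I) \<subseteq> radical R I"
  proof
    fix x assume "x \<in> radical R (radical R I)"
    then obtain m n :: nat where x: "x \<in> carrier R" and "(x [^] m) [^] n \<in> I"
      unfolding radical_def by auto
    then have "x [^] (m * n) \<in> I" by (simp add: nat_pow_pow)
    with x show "x \<in> radical R I" unfolding radical_def by blast
  qed
  show "radical R I \<subseteq> radical R (radical R I)"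
    by (rule subset_radical) (auto simp: radical_def)
qed

lemma (in ring) pow_mem_radicalD:
  assumes "I \<subseteq> carrier R" "x \<in> carrier R" "x [^] (n::nat) \<in> radical R I"
  shows "x \<in> radical R I"
  using assms radical_radical[OF assms(1)] unfolding radical_def by blast

lemma (in cring) add_pow_mem_ideal:
  assumes "ideal I R" and x: "x \<in> carrier R" and y: "y \<in> carrier R"
    and xm: "x [^] (m::nat) \<in> I" and yn: "y [^] (n::nat) \<in> I"
  shows "(x \<oplus> y) [^] (m + n) \<in> I"
proof -
  interpret ideal I R by fact
  \<comment> \<open>Peel off one factor \<open>x \<oplus> y\<close> at a time: a monomial \<open>x\<^sup>i y\<^sup>j\<close> with
    \<open>i + j \<ge> m + n\<close> has \<open>i \<ge> m\<close> or \<open>j \<ge> n\<close>.\<close>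
  have "x [^] i \<otimes> y [^] j \<otimes> (x \<oplus> y) [^] k \<in> I" if "m + n \<le> i + j + k" for i j k :: nat
    using that
  proof (induction k arbitrary: i j)
    case 0
    then consider "m \<le> i" | "n \<le> j" by linarith
    then show ?case
    proof cases
      case 1
      then have "x [^] i = x [^] m \<otimes> x [^] (i - m)" using x by (simp add: nat_pow_mult)
      then show ?thesis using xm x y by (simp add: I_r_closed)
    next
      case 2
      then have "y [^] j = y [^] n \<otimes> y [^] (j - n)" using y by (simp add: nat_pow_mult)
      then show ?thesis using yn x y by (simp add: I_l_closed I_r_closed)
    qed
  next
    case (Suc k)
    have "x [^] i \<otimes> y [^] j \<otimes> (x \<oplus> y) [^] Suc k
        = x [^] Suc i \<otimes> y [^] j \<otimes> (x \<oplus> y) [^] k \<oplus> x [^] i \<otimes> y [^] Suc j \<otimes> (x \<oplus> y) [^] k"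
      using x y by (simp add: nat_pow_Suc2 m_ac r_distr l_distr)
    moreover have "x [^] Suc i \<otimes> y [^] j \<otimes> (x \<oplus> y) [^] k \<in> I"
      by (rule Suc.IH) (use Suc.prems in simp)
    moreover have "x [^] i \<otimes> y [^] Suc j \<otimes> (x \<oplus> y) [^] k \<in> I"
      by (rule Suc.IH) (use Suc.prems in simp)
    ultimately show ?case by simp
  qed
  from this[of 0 0 "m + n"] show ?thesis using x y by simp
qed

lemma (in cring) radical_ideal:
  assumes "ideal I R"
  shows "ideal (radical R I) R"
proof -
  interpret ideal I R by fact
  show ?thesis
  proof (rule idealI)
    show "subgroup (radical R I) (add_monoid R)"
    proof (rule add.subgroupI)
      show "radical R I \<subseteq> carrier R" unfolding radical_def by blast
      show "radical R I \<noteq> {}" using subset_radical[OF a_subset] zero_closed by blast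
    next
      fix a assume "a \<in> radical R I"
      then obtain n :: nat where a: "a \<in> carrier R" "a [^] n \<in> I" unfolding radical_def by auto
      have "\<ominus> a = (\<ominus> \<one>) \<otimes> a" using a by (simp add: l_minus)
      then have "(\<ominus> a) [^] n = (\<ominus> \<one>) [^] n \<otimes> a [^] n" using a by (simp add: nat_pow_distrib)
      then have "(\<ominus> a) [^] n \<in> I" using I_l_closed[OF a(2)] by simp
      then show "\<ominus> a \<in> radical R I" unfolding radical_def using a by auto
    next
      fix a b assume "a \<in> radical R I" "b \<in> radical R I"
      then obtain m n :: nat where "a \<in> carrier R" "a [^] m \<in> I" "b \<in> carrier R" "b [^] n \<in> I"
        unfolding radical_def by auto
      moreover from this have "(a \<oplus> b) [^] (m + n) \<in> I" by (intro add_pow_mem_ideal is_ideal)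
      ultimately show "a \<oplus> b \<in> radical R I" unfolding radical_def by blast
    qed
  next
    fix a x assume "a \<in> radical R I" and x: "x \<in> carrier R"
    then obtain n :: nat where a: "a \<in> carrier R" "a [^] n \<in> I" unfolding radical_def by auto
    have "(x \<otimes> a) [^] n = x [^] n \<otimes> a [^] n" using a x by (simp add: nat_pow_distrib)
    then have "(x \<otimes> a) [^] n \<in> I" using I_l_closed[OF a(2)] x by simp
    then show "x \<otimes> a \<in> radical R I" unfolding radical_def using a x by auto
    then show "a \<otimes> x \<in> radical R I" using a x by (simp add: m_comm)
  qed (rule ring_axioms)
qed

lemma (in cring) radical_Idl_eqI:
  assumes "S \<subseteq> carrier R" "T \<subseteq> carrier R"
    and "S \<subseteq> Idl T" "T \<subseteq> radical R (Idl S)"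
  shows "radical R (Idl S) = radical R (Idl T)"
proof
  have "Idl S \<subseteq> Idl T"
    using assms by (intro genideal_minimal genideal_ideal)
  then show "radical R (Idl S) \<subseteq> radical R (Idl T)" by (rule radical_mono)
  have "Idl T \<subseteq> radical R (Idl S)"
    using assms by (intro genideal_minimal radical_ideal genideal_ideal)
  then have "radical R (Idl T) \<subseteq> radical R (radical R (Idl S))" by (rule radical_mono)
  also have "\<dots> = radical R (Idl S)"
    using ideal.Icarr[OF genideal_ideal[OF assms(1)]] by (intro radical_radical) blast
  finally show "radical R (Idl T) \<subseteq> radical R (Idl S)" .
qed

lemma (in ring) ideal_add_memD:
  assumes "ideal I R" "x \<oplus> y \<in> I" "x \<in> I" "y \<in> carrier R"
  shows "y \<in> I"
proof -
  interpret ideal I R by fact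
  have "x \<in> carrier R" using \<open>x \<in> I\<close> by (rule Icarr)
  then have "y = \<ominus> x \<oplus> (x \<oplus> y)" using \<open>y \<in> carrier R\<close> by algebra
  also have "\<dots> \<in> I"
    using assms(2,3) by (metis is_additive_subgroup additive_subgroup.a_closed a_inv_closed)
  finally show ?thesis .
qed

lemma (in ring) ideal_divides_memD:
  assumes "ideal I R" "a \<in> I" "a divides b"
  shows "b \<in> I"
  using assms ideal.I_r_closed unfolding factor_def by fastforce

lemma (in cring) cube_mem_ideal:
  assumes "ideal I R" and carr: "x \<in> carrier R" "y \<in> carrier R" "u \<in> carrier R" "v \<in> carrier R"
    and "x \<oplus> y \<in> I" "u \<oplus> v \<in> I" "u divides x \<otimes> y" "x \<otimes> v \<in> I"
  shows "x [^] (3::nat) \<in> I"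
proof -
  interpret ideal I R by fact
  obtain f where f: "f \<in> carrier R" "x \<otimes> y = u \<otimes> f"
    using \<open>u divides x \<otimes> y\<close> unfolding factor_def by blast
  have "x [^] (3::nat) = x \<otimes> x \<otimes> (x \<oplus> y) \<ominus> f \<otimes> x \<otimes> (u \<oplus> v) \<oplus> f \<otimes> (x \<otimes> v)"
  proof -
    have "x [^] (3::nat) = x \<otimes> x \<otimes> x" using carr by (simp add: numeral_3_eq_3)
    also have "\<dots> = x \<otimes> x \<otimes> (x \<oplus> y) \<ominus> f \<otimes> x \<otimes> (u \<oplus> v) \<oplus> f \<otimes> (x \<otimes> v)"
      using carr f by algebra
    finally show ?thesis .
  qed
  then show ?thesis
    using assms f by (simp add: minus_eq I_l_closed)
qed

theorem proposition1:
  fixes R (structure)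
  assumes "cring R"
    and "p0 \<in> carrier R" "p11 \<in> carrier R" "p12 \<in> carrier R"
    and "p21 \<in> carrier R" "p22 \<in> carrier R"
    and "p0 divides\<^bsub>R\<^esub> (p11 \<otimes>\<^bsub>R\<^esub> p22)"
    and "p21 divides\<^bsub>R\<^esub> (p11 \<otimes>\<^bsub>R\<^esub> p12)"
    and "p12 divides\<^bsub>R\<^esub> (p21 \<otimes>\<^bsub>R\<^esub> p22)"
  shows "radical R (Idl\<^bsub>R\<^esub> {p0, p11 \<oplus>\<^bsub>R\<^esub> p12, p21 \<oplus>\<^bsub>R\<^esub> p22})
       = radical R (Idl\<^bsub>R\<^esub> {p0, p11, p12, p21, p22})"
proof -
  interpret cring R by fact
  note carr = assms(2-6)
  define I where "I = Idl {p0, p11 \<oplus> p12, p21 \<oplus> p22}"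
  have I: "ideal I R" and gens: "p0 \<in> I" "p11 \<oplus> p12 \<in> I" "p21 \<oplus> p22 \<in> I"
    unfolding I_def using carr by (auto intro: genideal_ideal genideal_self[THEN subsetD])
  have I_carr: "I \<subseteq> carrier R" using ideal.Icarr[OF I] by blast
  then have I_rad: "I \<subseteq> radical R I" by (rule subset_radical)
  have rad: "ideal (radical R I) R" using I by (rule radical_ideal)
  have "p11 [^] (3::nat) \<in> I"
    using gens carr assms(8) ideal_divides_memD[OF I gens(1) assms(7)]
    by (intro cube_mem_ideal[OF I, of p11 p12 p21 p22]) simp_all
  then have r11: "p11 \<in> radical R I" using carr unfolding radical_def by blast
  have "p21 [^] (3::nat) \<in> radical R I"
    using gens I_rad carr assms(9) a_comm[OF carr(3,2)] ideal.I_l_closed[OF rad r11 carr(4)]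
    by (intro cube_mem_ideal[OF rad, of p21 p22 p12 p11]) auto
  then have r21: "p21 \<in> radical R I" by (rule pow_mem_radicalD[OF I_carr carr(4)])
  have r12: "p12 \<in> radical R I"
    using gens(2) I_rad by (blast intro: ideal_add_memD[OF rad _ r11 carr(3)])
  have r22: "p22 \<in> radical R I"
    using gens(3) I_rad by (blast intro: ideal_add_memD[OF rad _ r21 carr(5)])
  let ?J = "Idl {p0, p11, p12, p21, p22}"
  have "{p0, p11, p12, p21, p22} \<subseteq> ?J" using carr by (intro genideal_self) auto
  moreover have "additive_subgroup ?J R"
    using carr by (intro ideal.axioms(1) genideal_ideal) auto
  ultimately have "{p0, p11 \<oplus> p12, p21 \<oplus> p22} \<subseteq> ?J"
    by (auto intro: additive_subgroup.a_closed)
  moreover have "{p0, p11, p12, p21, p22} \<subseteq> radical R I"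
    using gens(1) I_rad r11 r12 r21 r22 by blast
  ultimately show ?thesis
    unfolding I_def using carr by (intro radical_Idl_eqI) auto
qed

end
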